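(* Let $\mathbf v\in\mathbb Z^4$ be nonzero and suppose the orbit $\mathcal A[\mathbf v]=\{\mathbf U\mathbf v:\mathbf U\in\mathcal A\}$ contains a root quadruple $\mathbf a$. Then: (1) $\mathbf a$ is the unique reduced quadruple in $\mathcal A[\mathbf v]$; (2) all values $L(\mathbf x)$, $\mathbf x\in\mathcal A[\mathbf v]$, are nonzero and have the same sign, and if this sign is positive, then the general reduction algorithm started from any $\mathbf x\in\mathcal A[\mathbf v]$ applies only $\mathbf S_4$ (to the quadruple ordered increasingly) until the root quadruple is reached.
   Context: $\mathbf S_1,\dots,\mathbf S_4$ are the $4\times4$ integer matrices acting on column vectors $(a_1,a_2,a_3,a_4)^T$ by replacing the $i$-th coordinate $a_i$ with $2\sum_{j\ne i}a_j-a_i$, other coordinates fixed. The Apollonian group $\mathcal A$ is the subgroup of $GL(4,\mathbb Z)$ generated by $\mathbf S_1,\dots,\mathbf S_4$. For $\mathbf v=(a,b,c,d)$, $|\mathbf v|=|a|+|b|+|c|+|d|$ and $L(\mathbf v)=a+b+c+d$. General reduction algorithm: order the quadruple increasingly, then apply the first $\mathbf S_i$ ($i=1,2,3,4$ in order) that strictly decreases $|\mathbf v|$, and repeat; halt when no $\mathbf S_i$ strictly decreases $|\mathbf v|$. A quadruple is reduced if no $\mathbf S_i$ strictly decreases $|\mathbf v|$. A reduced quadruple $\mathbf a$, ordered as $a\le b\le c\le d$, with $L(\mathbf a)\ge0$ is a root quadruple if $a+b+c\ge d>0$; a reduced $\mathbf a$ with $L(\mathbf a)<0$ is a root quadruple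 if $(-d,-c,-b,-a)$ is one. *)

theory Defs
  imports Main
begin

text \<open>Quadruples (a1,a2,a3,a4) are represented as integer lists of length 4;
  coordinate a_i is the list entry at index i-1.\<close>

definition Lsum :: "int list \<Rightarrow> int" where
  "Lsum v = sum_list v"

definition absn :: "int list \<Rightarrow> int" where
  "absn v = sum_list (map abs v)"

definition Sgen :: "nat \<Rightarrow> int list \<Rightarrow> int list" where
  "Sgen i v = v[i := 2 * (sum_list v - v ! i) - v ! i]"

text \<open>The Apollonian group, acting on quadruples: generated by S_1..S_4.
  Since every generator is an involution, the generated group consists exactly
  of the finite products of generators.\<close>
inductive_set apollonian_group :: "(int list \<Rightarrow> int list) set" where
  id_in: "id \<in> apollonian_group"
| gen_comp: "U \<in> apollonian_group \<Longrightarrow> i < 4 \<Longrightarrow> Sgen i \<circ> U \<in> apollonian_group"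

definition orbit :: "int list \<Rightarrow> int list set" where
  "orbit v = {U v | U. U \<in> apollonian_group}"

definition reduced :: "int list \<Rightarrow> bool" where
  "reduced v \<longleftrightarrow> \<not> (\<exists>i<4. absn (Sgen i v) < absn v)"

definition root_nonneg :: "int list \<Rightarrow> bool" where
  "root_nonneg v \<longleftrightarrow> reduced v \<and> Lsum v \<ge> 0 \<and>
     (let s = sort v in s!0 + s!1 + s!2 \<ge> s!3 \<and> s!3 > 0)"

definition root_quadruple :: "int list \<Rightarrow> bool" where
  "root_quadruple v \<longleftrightarrow>
     (if Lsum v \<ge> 0 then root_nonneg v
      else reduced v \<and> root_nonneg (map uminus (rev (sort v))))"

definition first_decr :: "int list \<Rightarrow> nat" where
  "first_decr w = (LEAST i. i < 4 \<and> absn (Sgen i w) < absn w)"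

text \<open>One step of the general reduction algorithm: order increasingly, then apply
  the first decreasing generator; a reduced quadruple is left unchanged (halt).\<close>
definition red_step :: "int list \<Rightarrow> int list" where
  "red_step v = (if reduced v then v else (let w = sort v in Sgen (first_decr w) w))"

end

(* With the defects d_k = L - 2 x_k, the generator S_j acts by d_j |-> -d_j and
   d_k |-> d_k + 2 d_j (k ~= j), and L |-> L + 2 d_j.  At a root quadruple with L > 0 all
   defects are nonnegative.  Walking away from it, never undoing the previous generator,
   every quadruple reached has exactly one negative defect d_i while d_k > 0 and
   d_i + d_k >= 0 for k ~= i.  Then x_i is the strict maximum and S_i is the only generator
   that decreases |x|: the quadruple is not reduced, and the reduction algorithm applies S_4
   to its increasing ordering, stepping back to (a reordering of) its parent.  So the orbit is
   a tree rooted at the root quadruple, with L > 0 throughout; the case L < 0 follows by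
   negating all coordinates. *)

theory Submission
  imports Defs "HOL-Library.Multiset"
begin

section \<open>Generators and defects\<close>

definition defect :: "int list \<Rightarrow> nat \<Rightarrow> int" where
  "defect x k = Lsum x - 2 * x ! k"

lemma length_Sgen [simp]: "length (Sgen i x) = length x"
  by (simp add: Sgen_def)

lemma Sgen_nth:
  "k < length x \<Longrightarrow> Sgen i x ! k = (if k = i then 2 * (Lsum x - x ! i) - x ! i else x ! k)"
  by (simp add: Sgen_def Lsum_def)

lemma mset_Sgen:
  "i < length x \<Longrightarrow> mset (Sgen i x) = add_mset (2 * (Lsum x - x ! i) - x ! i) (mset x - {#x ! i#})"
  by (simp add: Sgen_def Lsum_def mset_update)

lemma sum_list_list_update:
  fixes xs :: "'a::ab_group_add list"
  assumes "k < length xs"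
  shows "sum_list (xs[k := y]) = sum_list xs + y - xs ! k"
proof -
  have "sum_mset (mset xs) = xs ! k + sum_mset (mset xs - {#xs ! k#})"
    using assms by (simp add: sum_mset.remove)
  then show ?thesis using assms by (simp add: mset_update flip: sum_mset_sum_list)
qed

lemma Lsum_Sgen: "i < length x \<Longrightarrow> Lsum (Sgen i x) = Lsum x + 2 * defect x i"
  by (simp add: Sgen_def Lsum_def defect_def sum_list_list_update)

lemma absn_Sgen:
  "i < length x \<Longrightarrow> absn (Sgen i x) = absn x + \<bar>2 * (Lsum x - x ! i) - x ! i\<bar> - \<bar>x ! i\<bar>"
  by (simp add: Sgen_def absn_def Lsum_def map_update sum_list_list_update)

lemma defect_Sgen_self: "i < length x \<Longrightarrow> defect (Sgen i x) i = - defect x i"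
  by (simp add: defect_def Lsum_Sgen Sgen_nth)

lemma defect_Sgen_other:
  "k < length x \<Longrightarrow> k \<noteq> i \<Longrightarrow> i < length x \<Longrightarrow> defect (Sgen i x) k = defect x k + 2 * defect x i"
  by (simp add: defect_def Lsum_Sgen Sgen_nth)

lemma Sgen_Sgen [simp]: "Sgen i (Sgen i x) = x"
proof (cases "i < length x")
  case True
  then have "2 * (Lsum (Sgen i x) - Sgen i x ! i) - Sgen i x ! i = x ! i"
    by (simp add: Lsum_Sgen Sgen_nth defect_def)
  then have "Sgen i (Sgen i x) = (Sgen i x)[i := x ! i]"
    unfolding Sgen_def[of i "Sgen i x"] by (simp add: Lsum_def)
  then show ?thesis by (simp add: Sgen_def)
next
  case False
  then show ?thesis by (simp add: Sgen_def list_update_beyond)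
qed

lemma Sgen_eq_self: "defect x i = 0 \<Longrightarrow> Sgen i x = x"
  by (simp add: Sgen_def defect_def Lsum_def)

lemma sum_list_map_uminus: "sum_list (map uminus xs) = - sum_list (xs :: 'a::ab_group_add list)"
  using uminus_sum_list_map[of "\<lambda>y. y" xs] by (simp add: o_def)

lemma Sgen_map_uminus: "Sgen i (map uminus x) = map uminus (Sgen i x)"
  by (cases "i < length x") (simp_all add: Sgen_def map_update sum_list_map_uminus list_update_beyond)

lemma Lsum_map_uminus [simp]: "Lsum (map uminus x) = - Lsum x"
  by (simp add: Lsum_def sum_list_map_uminus)

lemma absn_map_uminus [simp]: "absn (map uminus x) = absn x"
  by (simp add: absn_def o_def)

lemma reduced_map_uminus [simp]: "reduced (map uminus x) \<longleftrightarrow> reduced x"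
  by (simp add: reduced_def Sgen_map_uminus)

section \<open>Orbits\<close>

lemma apollonian_group_Sgen: "i < 4 \<Longrightarrow> Sgen i \<in> apollonian_group"
  using apollonian_group.gen_comp[OF apollonian_group.id_in] by simp

lemma apollonian_group_comp:
  "U \<in> apollonian_group \<Longrightarrow> V \<in> apollonian_group \<Longrightarrow> U \<circ> V \<in> apollonian_group"
  by (induction rule: apollonian_group.induct) (auto simp: comp_assoc intro: apollonian_group.intros)

lemma apollonian_group_inverse:
  "U \<in> apollonian_group \<Longrightarrow> \<exists>V \<in> apollonian_group. V \<circ> U = id"
proof (induction rule: apollonian_group.induct)
  case id_in
  show ?case by (metis apollonian_group.id_in comp_id)
next
  case (gen_comp U i)
  then obtain V where "V \<in> apollonian_group" "V \<circ> U = id" by blast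
  then have "V \<circ> Sgen i \<in> apollonian_group" "(V \<circ> Sgen i) \<circ> (Sgen i \<circ> U) = id"
    using gen_comp.hyps by (auto intro: apollonian_group_comp apollonian_group_Sgen simp: fun_eq_iff)
  then show ?case by blast
qed

lemma length_apollonian_group: "U \<in> apollonian_group \<Longrightarrow> length (U x) = length x"
  by (induction rule: apollonian_group.induct) auto

lemma apollonian_group_map_uminus:
  "U \<in> apollonian_group \<Longrightarrow> U (map uminus x) = map uminus (U x)"
  by (induction rule: apollonian_group.induct) (auto simp: Sgen_map_uminus)

lemma orbit_subset: "a \<in> orbit v \<Longrightarrow> orbit v \<subseteq> orbit a"
proof
  fix x assume "a \<in> orbit v" "x \<in> orbit v"
  then obtain U W where U: "U \<in> apollonian_group" "a = U v" and W: "W \<in> apollonian_group" "x = W v"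
    by (auto simp: orbit_def)
  obtain V where V: "V \<in> apollonian_group" "V \<circ> U = id"
    using apollonian_group_inverse[OF U(1)] by blast
  have "x = (W \<circ> V) a" using U(2) W(2) V(2) by (metis comp_apply id_apply)
  moreover have "W \<circ> V \<in> apollonian_group" using W(1) V(1) by (rule apollonian_group_comp)
  ultimately show "x \<in> orbit a" unfolding orbit_def by blast
qed

lemma length_orbit: "x \<in> orbit v \<Longrightarrow> length x = length v"
  by (auto simp: orbit_def length_apollonian_group)

lemma map_uminus_orbit: "x \<in> orbit v \<Longrightarrow> map uminus x \<in> orbit (map uminus v)"
  by (auto simp: orbit_def) (metis apollonian_group_map_uminus)

section \<open>The orbit of a root quadruple as a tree\<close>

definition root_defects :: "int list \<Rightarrow> bool" where
  "root_defects x \<longleftrightarrow> length x = 4 \<and> 0 < Lsum x \<and> (\<forall>k<4. 0 \<le> defect x k)"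

text \<open>The condition \<open>0 < Lsum x - x ! i\<close> does not follow from the others: it fails for
  \<open>[0, 0, 0, L]\<close>, which \<open>S\<^sub>4\<close> merely negates.\<close>
definition branch_defects :: "int list \<Rightarrow> nat \<Rightarrow> bool" where
  "branch_defects x i \<longleftrightarrow> length x = 4 \<and> 0 < Lsum x \<and> i < 4 \<and> defect x i < 0 \<and> 0 < Lsum x - x ! i \<and>
     (\<forall>k<4. k \<noteq> i \<longrightarrow> 0 < defect x k \<and> 0 \<le> defect x i + defect x k)"

lemma branch_defects_Sgen:
  assumes len: "length x = 4" and L: "0 < Lsum x" and j: "j < 4" and dj: "0 < defect x j"
    and dk: "\<forall>k<4. k \<noteq> j \<longrightarrow> 0 \<le> defect x j + defect x k"
  shows "branch_defects (Sgen j x) j"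
proof -
  have "Lsum (Sgen j x) = Lsum x + 2 * defect x j"
    using j len by (simp add: Lsum_Sgen)
  moreover have "Lsum (Sgen j x) - Sgen j x ! j = Lsum x - x ! j"
    using j len by (simp add: Lsum_Sgen Sgen_nth defect_def)
  moreover have "0 < Lsum x - x ! j"
    using L dj by (simp add: defect_def)
  moreover have "defect (Sgen j x) j = - defect x j"
    using j len by (simp add: defect_Sgen_self)
  moreover have "defect (Sgen j x) k = defect x k + 2 * defect x j" if "k < 4" "k \<noteq> j" for k
    using that j len by (simp add: defect_Sgen_other)
  ultimately show ?thesis
    using len L j dj dk by (auto simp: branch_defects_def)
qed

text \<open>The third argument is the generator applied last (\<^const>\<open>None\<close> at the root).\<close>
inductive apollonian_tree :: "int list \<Rightarrow> int list \<Rightarrow> nat option \<Rightarrow> bool" for a where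
  root: "apollonian_tree a a None"
| child: "apollonian_tree a x t \<Longrightarrow> j < 4 \<Longrightarrow> t \<noteq> Some j \<Longrightarrow> 0 < defect x j
    \<Longrightarrow> apollonian_tree a (Sgen j x) (Some j)"

lemma apollonian_tree_defects:
  assumes root: "root_defects a" and "apollonian_tree a x t"
  shows "case t of None \<Rightarrow> x = a | Some i \<Rightarrow> branch_defects x i"
  using assms(2)
proof induction
  case root
  then show ?case by simp
next
  case (child x t j)
  have "length x = 4 \<and> 0 < Lsum x \<and> (\<forall>k<4. k \<noteq> j \<longrightarrow> 0 \<le> defect x j + defect x k)"
  proof (cases t)
    case None
    then show ?thesis using child root by (auto simp: root_defects_def)
  next
    case (Some i)
    then have i: "branch_defects x i" using child.IH by simp
    have "0 \<le> defect x j + defect x k" if "k < 4" "k \<noteq> j" for k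
    proof (cases "k = i")
      case True
      then show ?thesis using i child.hyps by (auto simp: branch_defects_def add.commute)
    next
      case False
      then have "0 < defect x k" using i that by (simp add: branch_defects_def)
      then show ?thesis using child.hyps by simp
    qed
    then show ?thesis using i by (simp add: branch_defects_def)
  qed
  then show ?case using child.hyps branch_defects_Sgen by auto
qed

lemma apollonian_tree_Sgen:
  assumes root: "root_defects a" and tree: "apollonian_tree a x t" and j: "j < 4"
  shows "\<exists>t'. apollonian_tree a (Sgen j x) t'"
proof (cases "t = Some j")
  case True
  then obtain y s where "x = Sgen j y" "apollonian_tree a y s"
    using tree True by (auto elim: apollonian_tree.cases)
  then show ?thesis by auto
next
  case not_last: False
  show ?thesis
  proof (cases "defect x j = 0")
    case True
    then show ?thesis using tree by (auto simp: Sgen_eq_self)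
  next
    case False
    have "0 \<le> defect x j"
      using apollonian_tree_defects[OF root tree] root j not_last
      by (cases t) (auto simp: root_defects_def branch_defects_def)
    then show ?thesis
      using apollonian_tree.child[OF tree j not_last] False by auto
  qed
qed

lemma orbit_apollonian_tree:
  assumes "root_defects a" and "x \<in> orbit a"
  shows "\<exists>t. apollonian_tree a x t"
proof -
  have "\<exists>t. apollonian_tree a (U a) t" if "U \<in> apollonian_group" for U
    using that
  proof induction
    case id_in
    then show ?case using apollonian_tree.root by auto
  next
    case (gen_comp U i)
    then show ?case using apollonian_tree_Sgen[OF assms(1)] by auto
  qed
  then show ?thesis using assms(2) by (auto simp: orbit_def)
qed

section \<open>Steps of the reduction algorithm\<close>

definition absn_decreases :: "int \<Rightarrow> int \<Rightarrow> bool" where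
  "absn_decreases L t \<longleftrightarrow> \<bar>2 * (L - t) - t\<bar> < \<bar>t\<bar>"

lemma absn_Sgen_less_iff:
  "k < length x \<Longrightarrow> absn (Sgen k x) < absn x \<longleftrightarrow> absn_decreases (Lsum x) (x ! k)"
  by (simp add: absn_Sgen absn_decreases_def)

lemma reduced_iff_set:
  "length x = 4 \<Longrightarrow> reduced x \<longleftrightarrow> (\<forall>y \<in> set x. \<not> absn_decreases (Lsum x) y)"
  by (simp add: reduced_def absn_Sgen_less_iff all_set_conv_all_nth)

lemma Lsum_mset_eq: "mset z = mset x \<Longrightarrow> Lsum z = Lsum x"
  by (simp add: Lsum_def flip: sum_mset_sum_list)

lemma reduced_mset_eq: "mset z = mset x \<Longrightarrow> length x = 4 \<Longrightarrow> reduced z \<longleftrightarrow> reduced x"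
proof -
  assume mset: "mset z = mset x" and len: "length x = 4"
  have "length z = 4" using mset len by (metis size_mset)
  moreover have "set z = set x" using mset by (metis set_mset_mset)
  moreover have "Lsum z = Lsum x" using mset by (rule Lsum_mset_eq)
  ultimately show ?thesis using len by (simp add: reduced_iff_set)
qed

lemma sort_mset_eq: "mset z = mset x \<Longrightarrow> sort z = sort x"
  by (rule properties_for_sort) simp_all

lemma red_step_mset_eq:
  assumes "mset z = mset x" and "length x = 4" and "\<not> reduced x"
  shows "red_step z = red_step x"
proof -
  have "\<not> reduced z" using assms reduced_mset_eq by blast
  moreover have "sort z = sort x" using assms(1) by (rule sort_mset_eq)
  ultimately show ?thesis using assms(3) by (simp add: red_step_def)
qed

lemma sort_strict_max:
  fixes xs :: "'a::linorder list"
  assumes i: "i < length xs" and max: "\<forall>k<length xs. k \<noteq> i \<longrightarrow> xs ! k < xs ! i"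
  shows "sort xs ! (length xs - 1) = xs ! i" and "q < length xs - 1 \<Longrightarrow> sort xs ! q < xs ! i"
proof -
  define others where "others = take i xs @ drop (Suc i) xs"
  have others_less: "y < xs ! i" if "y \<in> set others" for y
  proof -
    from that consider "y \<in> set (take i xs)" | "y \<in> set (drop (Suc i) xs)"
      by (auto simp: others_def)
    then obtain k where "k < length xs" "k \<noteq> i" "y = xs ! k"
    proof cases
      case 1
      then obtain m where "m < i" "y = xs ! m"
        by (auto simp: in_set_conv_nth)
      then show ?thesis using i by (intro that[of m]) auto
    next
      case 2
      then obtain m where "Suc i + m < length xs" "y = xs ! (Suc i + m)"
        by (force simp: in_set_conv_nth)
      then show ?thesis using that by auto
    qed
    then show ?thesis using max by auto
  qed
  have sort_xs: "sort xs = sort others @ [xs ! i]"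
  proof (rule properties_for_sort)
    show "sorted (sort others @ [xs ! i])"
      using others_less by (auto simp: sorted_append less_imp_le)
    show "mset (sort others @ [xs ! i]) = mset xs"
      by (subst (2) id_take_nth_drop[OF i]) (simp add: others_def)
  qed
  have len: "length (sort others) = length xs - 1"
    using i by (simp add: others_def)
  then show "sort xs ! (length xs - 1) = xs ! i"
    by (simp add: sort_xs nth_append)
  assume "q < length xs - 1"
  then have "sort others ! q \<in> set others"
    using len by (metis nth_mem set_sort)
  then show "sort xs ! q < xs ! i"
    using \<open>q < length xs - 1\<close> len others_less by (simp add: sort_xs nth_append)
qed

lemma branch_defects_absn_decreases:
  assumes "branch_defects x i"
  shows "absn_decreases (Lsum x) (x ! i)"
    and "k < 4 \<Longrightarrow> k \<noteq> i \<Longrightarrow> x ! k < x ! i \<and> \<not> absn_decreases (Lsum x) (x ! k)"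
  using assms by (auto simp: branch_defects_def defect_def absn_decreases_def abs_if)

lemma branch_defects_red_step:
  assumes branch: "branch_defects x i" and z: "mset z = mset x"
  shows "\<not> reduced z \<and> first_decr (sort z) = 3 \<and> mset (red_step z) = mset (Sgen i x)"
proof -
  have len: "length x = 4" and i: "i < 4"
    using branch by (auto simp: branch_defects_def)
  note top = branch_defects_absn_decreases[OF branch]
  define s where "s = sort x"
  have len_s: "length s = 4" and mset_s: "mset s = mset x"
    using len by (simp_all add: s_def)
  have Lsum_s: "Lsum s = Lsum x"
    using mset_s by (rule Lsum_mset_eq)
  have s3: "s ! 3 = x ! i" and s_less: "q < 3 \<Longrightarrow> s ! q < x ! i" for q
    using sort_strict_max[of i x] len i top(2) by (simp_all add: s_def)
  have not_decr_s: "\<not> absn_decreases (Lsum x) (s ! q)" if "q < 3" for q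
  proof -
    have "s ! q \<in> set s" using that len_s by simp
    then have "s ! q \<in> set x" by (simp add: s_def)
    then obtain k where "k < 4" "s ! q = x ! k" using len by (auto simp: in_set_conv_nth)
    moreover have "k \<noteq> i" using s_less[OF that] calculation by auto
    ultimately show ?thesis using top(2) by auto
  qed
  have not_reduced: "\<not> reduced x"
    using len i top(1) by (auto simp: reduced_iff_set)
  have "first_decr s = 3"
    unfolding first_decr_def
  proof (rule Least_equality)
    show "3 < (4::nat) \<and> absn (Sgen 3 s) < absn s"
      using len_s Lsum_s s3 top(1) by (simp add: absn_Sgen_less_iff)
    show "3 \<le> m" if "m < 4 \<and> absn (Sgen m s) < absn s" for m
      using that len_s Lsum_s not_decr_s by (metis absn_Sgen_less_iff not_le)
  qed
  moreover have "mset (Sgen 3 s) = mset (Sgen i x)"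
    using len_s len i mset_s Lsum_s s3 by (simp add: mset_Sgen)
  moreover have "sort z = s"
    using sort_mset_eq[OF z] by (simp add: s_def)
  ultimately have "first_decr (sort z) = 3 \<and> mset (red_step z) = mset (Sgen i x)"
    using red_step_mset_eq[OF z len not_reduced] not_reduced
    by (simp add: red_step_def s_def)
  then show ?thesis
    using reduced_mset_eq[OF z len] not_reduced by blast
qed

definition reduction_applies_S4 :: "int list \<Rightarrow> nat \<Rightarrow> bool" where
  "reduction_applies_S4 x n \<longleftrightarrow>
     (\<forall>k<n. \<not> reduced ((red_step ^^ k) x) \<and> first_decr (sort ((red_step ^^ k) x)) = 3)"

lemma reduction_applies_S4_0 [simp]: "reduction_applies_S4 x 0"
  by (simp add: reduction_applies_S4_def)

lemma reduction_applies_S4_Suc: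
  "reduction_applies_S4 x (Suc n) \<longleftrightarrow>
     \<not> reduced x \<and> first_decr (sort x) = 3 \<and> reduction_applies_S4 (red_step x) n"
  by (auto simp: reduction_applies_S4_def less_Suc_eq_0_disj funpow_Suc_right simp del: funpow.simps)

lemma apollonian_tree_reduction:
  assumes root: "root_defects a" and "apollonian_tree a x t" and "mset z = mset x"
  shows "\<exists>n. reduction_applies_S4 z n \<and> mset ((red_step ^^ n) z) = mset a"
  using assms(2,3)
proof (induction arbitrary: z)
  case root
  then show ?case by (intro exI[of _ 0]) simp
next
  case (child x t j)
  have "branch_defects (Sgen j x) j"
    using apollonian_tree_defects[OF root apollonian_tree.child[OF child.hyps]] by simp
  then have step: "\<not> reduced z \<and> first_decr (sort z) = 3 \<and> mset (red_step z) = mset x"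
    using branch_defects_red_step child.prems by fastforce
  then obtain n where "reduction_applies_S4 (red_step z) n" "mset ((red_step ^^ n) (red_step z)) = mset a"
    using child.IH by blast
  then have "reduction_applies_S4 z (Suc n) \<and> mset ((red_step ^^ Suc n) z) = mset a"
    using step by (simp add: reduction_applies_S4_Suc funpow_Suc_right del: funpow.simps)
  then show ?case by blast
qed

lemma orbit_root_defects:
  assumes root: "root_defects a" and x: "x \<in> orbit a"
  shows "0 < Lsum x" and "reduced x \<Longrightarrow> x = a"
    and "\<exists>n. reduction_applies_S4 x n \<and> sort ((red_step ^^ n) x) = sort a"
proof -
  obtain t where tree: "apollonian_tree a x t"
    using orbit_apollonian_tree[OF root x] by blast
  note defects = apollonian_tree_defects[OF root tree]
  show "0 < Lsum x"
    using defects root by (cases t) (auto simp: root_defects_def branch_defects_def)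
  show "x = a" if "reduced x"
    using defects that branch_defects_red_step[of x] by (cases t) auto
  show "\<exists>n. reduction_applies_S4 x n \<and> sort ((red_step ^^ n) x) = sort a"
    using apollonian_tree_reduction[OF root tree] sort_mset_eq by blast
qed

lemma orbit_negated_root_defects:
  assumes root: "root_defects (map uminus a)" and x: "x \<in> orbit a"
  shows "Lsum x < 0" and "reduced x \<Longrightarrow> x = a"
proof -
  have "map uminus x \<in> orbit (map uminus a)"
    using x by (rule map_uminus_orbit)
  note negated = orbit_root_defects[OF root this]
  show "Lsum x < 0"
    using negated(1) by simp
  show "x = a" if "reduced x"
    using negated(2) that by (simp add: inj_map_eq_map)
qed

lemma root_defects_iff:
  "root_defects x \<longleftrightarrow> length x = 4 \<and> 0 < Lsum x \<and> (\<forall>y \<in> set x. 2 * y \<le> Lsum x)"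
  by (auto simp: root_defects_def defect_def all_set_conv_all_nth)

lemma root_defects_mset_eq: "mset z = mset x \<Longrightarrow> root_defects z \<longleftrightarrow> root_defects x"
proof -
  assume mset: "mset z = mset x"
  have "length z = length x" using mset by (metis size_mset)
  moreover have "set z = set x" using mset by (metis set_mset_mset)
  moreover have "Lsum z = Lsum x" using mset by (rule Lsum_mset_eq)
  ultimately show ?thesis by (simp add: root_defects_iff)
qed

lemma root_nonneg_imp_root_defects:
  assumes len: "length x = 4" and root: "root_nonneg x"
  shows "root_defects x"
proof -
  define s where "s = sort x"
  have "length s = 4" using len by (simp add: s_def)
  then obtain p q r u where s: "sort x = [p, q, r, u]"
    unfolding s_def[symmetric] by (auto simp: numeral_eq_Suc length_Suc_conv)
  have "p \<le> q" "q \<le> r" "r \<le> u"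
    using sorted_sort[where xs = x] by (simp_all add: s)
  moreover have "u \<le> p + q + r" "0 < u"
    using root by (simp_all add: root_nonneg_def s)
  moreover have "Lsum x = p + q + r + u"
  proof -
    have "mset (sort x) = mset x" by simp
    then have "Lsum x = Lsum (sort x)" by (rule Lsum_mset_eq[symmetric])
    then show ?thesis by (simp add: s Lsum_def)
  qed
  moreover have "set x = {p, q, r, u}"
    by (metis set_sort s list.set(1) list.set(2))
  ultimately show ?thesis
    using len by (auto simp: root_defects_iff)
qed

lemma root_quadruple_root_defects:
  assumes len: "length a = 4" and root: "root_quadruple a"
  shows "root_defects a \<or> root_defects (map uminus a)"
proof (cases "0 \<le> Lsum a")
  case True
  then show ?thesis
    using root len root_nonneg_imp_root_defects by (simp add: root_quadruple_def)
next
  case False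
  then have "root_defects (map uminus (rev (sort a)))"
    using root len root_nonneg_imp_root_defects by (simp add: root_quadruple_def)
  moreover have "mset (map uminus (rev (sort a))) = mset (map uminus a)"
    by simp
  ultimately show ?thesis
    using root_defects_mset_eq by blast
qed

theorem theorem3p2:
  fixes v a :: "int list"
  assumes "length v = 4"
    and "v \<noteq> [0, 0, 0, 0]"
    and "a \<in> orbit v"
    and "root_quadruple a"
  shows "(\<forall>x \<in> orbit v. reduced x \<longrightarrow> x = a)
    \<and> (\<forall>x \<in> orbit v. Lsum x \<noteq> 0)
    \<and> ((\<forall>x \<in> orbit v. Lsum x > 0) \<or> (\<forall>x \<in> orbit v. Lsum x < 0))
    \<and> ((\<forall>x \<in> orbit v. Lsum x > 0) \<longrightarrow>
         (\<forall>x \<in> orbit v. \<exists>n.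
            (\<forall>k<n. \<not> reduced ((red_step ^^ k) x)
                   \<and> first_decr (sort ((red_step ^^ k) x)) = 3)
            \<and> sort ((red_step ^^ n) x) = sort a))"
proof -
  have "length a = 4"
    using assms(1,3) by (simp add: length_orbit)
  have orbit: "orbit v \<subseteq> orbit a"
    using assms(3) by (rule orbit_subset)
  from root_quadruple_root_defects[OF \<open>length a = 4\<close> assms(4)] show ?thesis
  proof
    assume "root_defects a"
    then have "\<forall>x \<in> orbit v. 0 < Lsum x \<and> (reduced x \<longrightarrow> x = a)
        \<and> (\<exists>n. reduction_applies_S4 x n \<and> sort ((red_step ^^ n) x) = sort a)"
      using orbit_root_defects[of a] orbit by blast
    then show ?thesis
      unfolding reduction_applies_S4_def by fastforce
  next
    assume "root_defects (map uminus a)"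
    then have "\<forall>x \<in> orbit v. Lsum x < 0 \<and> (reduced x \<longrightarrow> x = a)"
      using orbit_negated_root_defects[of a] orbit by blast
    then show ?thesis
      using assms(3) by fastforce
  qed
qed

end
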